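(* Let $\Phi\colon\mathrm{Cl}_{r,s+1}\to\mathrm{Cl}_{s,r+1}$ be the algebra isomorphism determined on orthonormal generators by $\Phi(z_i)=b_ib_{r+1}$ ($i=1,\ldots,r$), $\Phi(\zeta_j)=a_jb_{r+1}$ ($j=1,\ldots,s$), $\Phi(\zeta_{s+1})=b_{r+1}$, where $z_1,\ldots,z_r,\zeta_1,\ldots,\zeta_{s+1}$ are orthonormal generators of $\mathrm{Cl}_{r,s+1}$ ($\langle z_i,z_i\rangle=1$, $\langle\zeta_j,\zeta_j\rangle=-1$) and $a_1,\ldots,a_s,b_1,\ldots,b_{r+1}$ orthonormal generators of $\mathrm{Cl}_{s,r+1}$ ($\langle a_i,a_i\rangle=1$, $\langle b_j,b_j\rangle=-1$). Let $(V,\langle\cdot\,,\cdot\rangle_V)$ be an admissible $\mathrm{Cl}_{s,r+1}$-module with representation $J$ and let $\{v_\alpha\}$ be an integral basis of it such that each $J_{a_i}$ and each $J_{b_j}$ permutes $\{v_\alpha\}$ up to sign. Then $\{v_\alpha\}$ is also an integral basis of the admissible $\mathrm{Cl}_{r,s+1}$-module $(V,\langle\cdot\,,\cdot\rangle_V)$ with representation $J\circ\Phi$.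
   Context: A scalar product is a real symmetric non-degenerate bilinear form. $\mathrm{Cl}_{p,q}$ is the Clifford algebra generated by $\mathbb R^{p,q}$ ($\mathbb R^{p+q}$ with quadratic form $x_1^2+\dots+x_p^2-x_{p+1}^2-\dots-x_{p+q}^2$) with relation $z^2=-\langle z,z\rangle\cdot1$. A $\mathrm{Cl}_{p,q}$-module $V$ with representation $J$ is admissible if it carries a scalar product with $\langle J_zu,v\rangle_V=-\langle u,J_zv\rangle_V$ for all $z,u,v$. An integral basis of an admissible module is a basis $\{v_\alpha\}$ with $\langle v_\alpha,v_\beta\rangle_V=0$ for $\alpha\neq\beta$, $\langle v_\alpha,v_\alpha\rangle_V=\pm1$, and $\langle J_{x}v_\alpha,v_\beta\rangle_V\in\{1,-1,0\}$ for every orthonormal generator $x$ and all $\alpha,\beta$. An operator permutes $\{v_\alpha\}$ up to sign if it maps each $v_\alpha$ to $\pm v_\beta$ for some $\beta$. *)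

theory Defs
  imports "HOL-Analysis.Analysis"
begin

definition gram :: "nat \<Rightarrow> nat \<Rightarrow> nat \<Rightarrow> nat \<Rightarrow> real" where
  "gram p q k l = (if k = l \<and> k < p then 1 else if k = l \<and> p \<le> k \<and> k < p + q then -1 else 0)"

text \<open>A representation J of Cl_{p,q} on V, given (via the universal property) by the images
  of the orthonormal generators: linear maps with J_k J_l + J_l J_k = -2<e_k,e_l> Id,
  i.e. z^2 = -<z,z> 1.\<close>
definition cl_module :: "nat \<Rightarrow> nat \<Rightarrow> (nat \<Rightarrow> 'v::real_vector \<Rightarrow> 'v) \<Rightarrow> bool" where
  "cl_module p q J \<longleftrightarrow> (\<forall>k < p + q. linear (J k)) \<and>
     (\<forall>k < p + q. \<forall>l < p + q. \<forall>x. J k (J l x) + J l (J k x) = (-2 * gram p q k l) *\<^sub>R x)"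

definition Jvec :: "nat \<Rightarrow> nat \<Rightarrow> (nat \<Rightarrow> 'v::real_vector \<Rightarrow> 'v) \<Rightarrow> (nat \<Rightarrow> real) \<Rightarrow> 'v \<Rightarrow> 'v" where
  "Jvec p q J z x = (\<Sum>k < p + q. z k *\<^sub>R J k x)"

definition scalar_product :: "('v::real_vector \<Rightarrow> 'v \<Rightarrow> real) \<Rightarrow> bool" where
  "scalar_product B \<longleftrightarrow> bilinear B \<and> (\<forall>u w. B u w = B w u) \<and>
     (\<forall>u. (\<forall>w. B u w = 0) \<longrightarrow> u = 0)"

definition admissible :: "nat \<Rightarrow> nat \<Rightarrow> ('v::real_vector \<Rightarrow> 'v \<Rightarrow> real) \<Rightarrow> (nat \<Rightarrow> 'v \<Rightarrow> 'v) \<Rightarrow> bool" where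
  "admissible p q B J \<longleftrightarrow> cl_module p q J \<and> scalar_product B \<and>
     (\<forall>z u w. B (Jvec p q J z u) w = - B u (Jvec p q J z w))"

definition integral_basis :: "nat \<Rightarrow> nat \<Rightarrow> ('v::real_vector \<Rightarrow> 'v \<Rightarrow> real) \<Rightarrow> (nat \<Rightarrow> 'v \<Rightarrow> 'v)
     \<Rightarrow> ('i::finite \<Rightarrow> 'v) \<Rightarrow> bool" where
  "integral_basis p q B J v \<longleftrightarrow> inj v \<and> independent (range v) \<and> span (range v) = UNIV \<and>
     (\<forall>a b. a \<noteq> b \<longrightarrow> B (v a) (v b) = 0) \<and>
     (\<forall>a. B (v a) (v a) \<in> {1, -1}) \<and>
     (\<forall>k < p + q. \<forall>a b. B (J k (v a)) (v b) \<in> {1, -1, 0})"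

definition permutes_up_to_sign :: "('v::real_vector \<Rightarrow> 'v) \<Rightarrow> ('i \<Rightarrow> 'v) \<Rightarrow> bool" where
  "permutes_up_to_sign T v \<longleftrightarrow> (\<forall>a. \<exists>b. T (v a) = v b \<or> T (v a) = - v b)"

text \<open>Generators of Cl_{s,r+1}: a_1..a_s are
  indices 0..s-1, b_1..b_{r+1} are indices s..s+r. Generators of Cl_{r,s+1}: z_1..z_r are
  indices 0..r-1, zeta_1..zeta_{s+1} are indices r..r+s.\<close>
definition JPhi :: "nat \<Rightarrow> nat \<Rightarrow> (nat \<Rightarrow> 'v \<Rightarrow> 'v) \<Rightarrow> nat \<Rightarrow> 'v \<Rightarrow> 'v" where
  "JPhi r s J k = (if k < r then J (s + k) \<circ> J (s + r)
                   else if k < r + s then J (k - r) \<circ> J (s + r)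
                   else J (s + r))"

end

theory Submission
  imports Defs
begin

text \<open>In Cl(s, r+1) the last generator b squares to 1 and anticommutes with all other
  generators e, so the products e b anticommute pairwise, square to minus the square of e,
  and anticommute with b: together with b they satisfy the relations of Cl(r, s+1).
  Skew-adjointness of J(e) J(b) follows from that of J(e) and J(b) and their anticommutation.
  The value condition of an integral basis holds for every operator permuting the basis up to
  sign, and this property is preserved under composition.\<close>

lemma admissible_generator_skew:
  assumes "admissible p q B J" "k < p + q"
  shows "B (J k u) w = - B u (J k w)"
proof -
  define e where "e = (\<lambda>i::nat. if i = k then (1::real) else 0)"
  have "Jvec p q J e x = J k x" for x
  proof -
    have "Jvec p q J e x = (\<Sum>i<p+q. if i = k then J i x else 0)"
      unfolding Jvec_def by (intro sum.cong) (auto simp: e_def)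
    with assms(2) show ?thesis by simp
  qed
  with assms(1) show ?thesis
    unfolding admissible_def by metis
qed

lemma admissibleI_generators:
  assumes "cl_module p q J" "scalar_product B"
    and skew: "\<And>k u w. k < p + q \<Longrightarrow> B (J k u) w = - B u (J k w)"
  shows "admissible p q B J"
proof -
  have "bilinear B" using assms(2) unfolding scalar_product_def by blast
  then have l: "linear (\<lambda>x. B x w)" and r: "linear (B u)" for u w
    by (auto simp: bilinear_def)
  have "B (Jvec p q J z u) w = - B u (Jvec p q J z w)" for z u w
  proof -
    have "B (Jvec p q J z u) w = (\<Sum>k<p+q. z k * B (J k u) w)"
      unfolding Jvec_def by (simp add: linear_sum[OF l] linear_scale[OF l])
    also have "\<dots> = (\<Sum>k<p+q. - (z k * B u (J k w)))"
      using skew by (intro sum.cong) auto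
    also have "\<dots> = - B u (Jvec p q J z w)"
      unfolding Jvec_def by (simp add: linear_sum[OF r] linear_scale[OF r] sum_negf)
    finally show ?thesis .
  qed
  with assms(1,2) show ?thesis
    unfolding admissible_def by blast
qed

lemma cl_module_square:
  assumes "cl_module p q J" "m < p + q"
  shows "J m (J m x) = (- gram p q m m) *\<^sub>R x"
proof -
  have "J m (J m x) + J m (J m x) = (-2 * gram p q m m) *\<^sub>R x"
    using assms unfolding cl_module_def by blast
  then have "2 *\<^sub>R J m (J m x) = 2 *\<^sub>R ((- gram p q m m) *\<^sub>R x)"
    by (simp add: scaleR_2)
  then show ?thesis by (metis scaleR_cancel_left zero_neq_numeral)
qed

lemma cl_module_anticommute:
  assumes "cl_module p q J" "m < p + q" "n < p + q" "m \<noteq> n"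
  shows "J m (J n x) = - J n (J m x)"
proof -
  have "J m (J n x) + J n (J m x) = (-2 * gram p q m n) *\<^sub>R x"
    using assms unfolding cl_module_def by blast
  with assms(4) show ?thesis by (simp add: gram_def eq_neg_iff_add_eq_0)
qed

lemma permutes_up_to_sign_comp:
  assumes "linear T" "permutes_up_to_sign T v" "permutes_up_to_sign S v"
  shows "permutes_up_to_sign (T \<circ> S) v"
  unfolding permutes_up_to_sign_def
proof
  fix a
  obtain c where c: "S (v a) = v c \<or> S (v a) = - v c"
    using assms(3) unfolding permutes_up_to_sign_def by blast
  obtain d where d: "T (v c) = v d \<or> T (v c) = - v d"
    using assms(2) unfolding permutes_up_to_sign_def by blast
  have "T (- v c) = - T (v c)" using assms(1) by (simp add: linear_neg)
  with c d show "\<exists>b. (T \<circ> S) (v a) = v b \<or> (T \<circ> S) (v a) = - v b"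
    by (auto intro!: exI[of _ d])
qed

lemma integral_basis_if_permutes_up_to_sign:
  assumes "integral_basis p q B J v" "bilinear B"
    and perm: "\<And>k. k < p' + q' \<Longrightarrow> permutes_up_to_sign (J' k) v"
  shows "integral_basis p' q' B J' v"
proof -
  have basis: "inj v" "independent (range v)" "span (range v) = UNIV"
    "\<forall>a b. a \<noteq> b \<longrightarrow> B (v a) (v b) = 0" "\<forall>a. B (v a) (v a) \<in> {1, -1}"
    using assms(1) unfolding integral_basis_def by auto
  have B_basis: "B (v d) (v c) \<in> {1, -1, 0}" for d c
    using basis(4,5) by (cases "d = c") auto
  have "\<forall>k < p' + q'. \<forall>a c. B (J' k (v a)) (v c) \<in> {1, -1, 0}"
  proof (intro allI impI)
    fix k a c assume k: "k < p' + q'"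
    obtain d where "J' k (v a) = v d \<or> J' k (v a) = - v d"
      using perm[OF k] unfolding permutes_up_to_sign_def by blast
    then show "B (J' k (v a)) (v c) \<in> {1, -1, 0}"
      using B_basis[of d c] bilinear_lneg[OF assms(2), of "v d" "v c"] by auto
  qed
  with basis show ?thesis
    unfolding integral_basis_def by blast
qed

text \<open>Phi maps the generator with index k < r + s to the product of the generator with
  index phi_index r s k and the last generator b_(r+1).\<close>
definition phi_index :: "nat \<Rightarrow> nat \<Rightarrow> nat \<Rightarrow> nat" where
  "phi_index r s k = (if k < r then s + k else k - r)"

lemma phi_index_less: "k < r + s \<Longrightarrow> phi_index r s k < s + r"
  unfolding phi_index_def by auto

lemma gram_phi_index:
  assumes "k < r + s" "l < r + s"
  shows "gram s (r + 1) (phi_index r s k) (phi_index r s l) = - gram r (s + 1) k l"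
  using assms unfolding gram_def phi_index_def by auto

lemma JPhi_phi_index: "k < r + s \<Longrightarrow> JPhi r s J k = J (phi_index r s k) \<circ> J (s + r)"
  unfolding JPhi_def phi_index_def by auto

lemma JPhi_last: "JPhi r s J (r + s) = J (s + r)"
  unfolding JPhi_def by auto

lemma less_add_Suc_cases:
  fixes k r s :: nat
  assumes "k < r + (s + 1)"
  obtains "k < r + s" | "k = r + s"
proof -
  have "k < r + s \<or> k = r + s" using assms by linarith
  with that show ?thesis by blast
qed

context
  fixes r s :: nat and J :: "nat \<Rightarrow> 'v::real_vector \<Rightarrow> 'v"
  assumes cl: "cl_module s (r + 1) J"
begin

private lemma last_square: "J (s + r) (J (s + r) x) = x"
  using cl_module_square[OF cl, of "s + r"] by (simp add: gram_def)

private lemma last_anticommute: "m < s + r \<Longrightarrow> J (s + r) (J m x) = - J m (J (s + r) x)"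
  using cl_module_anticommute[OF cl, of "s + r" m] by simp

private lemma linear_generator: "m < s + (r + 1) \<Longrightarrow> linear (J m)"
  using cl unfolding cl_module_def by blast

lemma linear_JPhi:
  assumes "k < r + (s + 1)"
  shows "linear (JPhi r s J k)"
proof (cases rule: less_add_Suc_cases[OF assms])
  case 1
  then have "phi_index r s k < s + (r + 1)" using phi_index_less by fastforce
  with 1 show ?thesis
    by (simp add: JPhi_phi_index linear_compose linear_generator)
next
  case 2
  then show ?thesis by (simp add: JPhi_last linear_generator)
qed

private lemma product_with_last:
  assumes "m < s + r" "n < s + r"
  shows "J m (J (s + r) (J n (J (s + r) x))) = - J m (J n x)"
proof -
  have "J (s + r) (J n (J (s + r) x)) = - J n x"
    using last_anticommute[OF assms(2)] last_square by simp
  moreover have "linear (J m)" using assms(1) by (simp add: linear_generator)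
  ultimately show ?thesis by (simp add: linear_neg)
qed

lemma JPhi_anticommutator:
  assumes k: "k < r + (s + 1)" and l: "l < r + (s + 1)"
  shows "JPhi r s J k (JPhi r s J l x) + JPhi r s J l (JPhi r s J k x)
       = (-2 * gram r (s + 1) k l) *\<^sub>R x"
proof (cases rule: less_add_Suc_cases[OF k]; cases rule: less_add_Suc_cases[OF l])
  assume kl: "k < r + s" "l < r + s"
  let ?m = "phi_index r s k" and ?n = "phi_index r s l"
  have mn: "?m < s + r" "?n < s + r" using phi_index_less kl by auto
  have "JPhi r s J k (JPhi r s J l x) + JPhi r s J l (JPhi r s J k x)
      = - (J ?m (J ?n x) + J ?n (J ?m x))"
    using product_with_last[OF mn] product_with_last[OF mn(2,1)]
    by (simp add: JPhi_phi_index kl)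
  also have "J ?m (J ?n x) + J ?n (J ?m x) = (-2 * gram s (r + 1) ?m ?n) *\<^sub>R x"
    using cl mn unfolding cl_module_def by auto
  finally show ?thesis
    using gram_phi_index[OF kl] by simp
next
  assume kl: "k < r + s" "l = r + s"
  then have m: "phi_index r s k < s + r" by (simp add: phi_index_less)
  have "JPhi r s J k (JPhi r s J l x) = J (phi_index r s k) x"
    using kl last_square by (simp add: JPhi_phi_index JPhi_last)
  moreover have "JPhi r s J l (JPhi r s J k x) = - J (phi_index r s k) x"
    using kl last_square last_anticommute[OF m] by (simp add: JPhi_phi_index JPhi_last)
  moreover have "gram r (s + 1) k l = 0" using kl by (simp add: gram_def)
  ultimately show ?thesis by simp
next
  assume kl: "k = r + s" "l < r + s"
  then have n: "phi_index r s l < s + r" by (simp add: phi_index_less)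
  have "JPhi r s J l (JPhi r s J k x) = J (phi_index r s l) x"
    using kl last_square by (simp add: JPhi_phi_index JPhi_last)
  moreover have "JPhi r s J k (JPhi r s J l x) = - J (phi_index r s l) x"
    using kl last_square last_anticommute[OF n] by (simp add: JPhi_phi_index JPhi_last)
  moreover have "gram r (s + 1) k l = 0" using kl by (simp add: gram_def)
  ultimately show ?thesis by simp
next
  assume "k = r + s" "l = r + s"
  moreover have "gram r (s + 1) (r + s) (r + s) = -1" by (simp add: gram_def)
  ultimately show ?thesis
    using last_square by (simp add: JPhi_last scaleR_2)
qed

lemma cl_module_JPhi: "cl_module r (s + 1) (JPhi r s J)"
  unfolding cl_module_def using linear_JPhi JPhi_anticommutator by blast

lemma JPhi_skew:
  fixes B :: "'v \<Rightarrow> 'v \<Rightarrow> real"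
  assumes adm: "admissible s (r + 1) B J" and k: "k < r + (s + 1)"
  shows "B (JPhi r s J k u) w = - B u (JPhi r s J k w)"
proof (cases rule: less_add_Suc_cases[OF k])
  case 1
  then have m: "phi_index r s k < s + r" by (rule phi_index_less)
  have "bilinear B" using adm unfolding admissible_def scalar_product_def by blast
  with 1 m show ?thesis
    using admissible_generator_skew[OF adm, of "phi_index r s k"]
      admissible_generator_skew[OF adm, of "s + r"] last_anticommute[OF m] bilinear_rneg
    by (simp add: JPhi_phi_index)
next
  case 2
  then show ?thesis
    using admissible_generator_skew[OF adm, of "s + r"] by (simp add: JPhi_last)
qed

lemma JPhi_permutes_up_to_sign:
  assumes perm: "\<And>m. m < s + (r + 1) \<Longrightarrow> permutes_up_to_sign (J m) v"
    and k: "k < r + (s + 1)"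
  shows "permutes_up_to_sign (JPhi r s J k) v"
proof (cases rule: less_add_Suc_cases[OF k])
  case 1
  then have m: "phi_index r s k < s + (r + 1)" using phi_index_less by fastforce
  show ?thesis
    using 1 permutes_up_to_sign_comp[OF linear_generator[OF m] perm[OF m], of "J (s + r)"] perm
    by (simp add: JPhi_phi_index)
next
  case 2
  then show ?thesis using perm by (simp add: JPhi_last)
qed

end

theorem corollary3p2:
  fixes r s :: nat
    and B :: "'v::real_vector \<Rightarrow> 'v \<Rightarrow> real"
    and J :: "nat \<Rightarrow> 'v \<Rightarrow> 'v"
    and v :: "'i::finite \<Rightarrow> 'v"
  assumes "admissible s (r + 1) B J"
    and "integral_basis s (r + 1) B J v"
    and "\<forall>k < s + (r + 1). permutes_up_to_sign (J k) v"
  shows "admissible r (s + 1) B (JPhi r s J) \<and> integral_basis r (s + 1) B (JPhi r s J) v"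
proof
  have cl: "cl_module s (r + 1) J" and sp: "scalar_product B"
    using assms(1) unfolding admissible_def by blast+
  have bl: "bilinear B" using sp unfolding scalar_product_def by blast
  have perm: "\<And>m. m < s + (r + 1) \<Longrightarrow> permutes_up_to_sign (J m) v"
    using assms(3) by blast
  show "admissible r (s + 1) B (JPhi r s J)"
  proof (rule admissibleI_generators[OF cl_module_JPhi[OF cl] sp])
    fix k u w assume "k < r + (s + 1)"
    then show "B (JPhi r s J k u) w = - B u (JPhi r s J k w)"
      by (rule JPhi_skew[OF cl assms(1)])
  qed
  show "integral_basis r (s + 1) B (JPhi r s J) v"
    using integral_basis_if_permutes_up_to_sign[OF assms(2) bl]
      JPhi_permutes_up_to_sign[OF cl perm] .
qed

end
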